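(* Let $B$ be a real $Q\times Q$ matrix that is symmetric, positive definite, and satisfies $B_{pq}\le0$ for $p\ne q$, and consider a cone schedule generated by $B$ with workload $X(\cdot)$. Suppose $\lim_{k\to\infty}X(t_k)/t_k=\eta\neq0$ for some increasing unbounded sequence $(t_k)$. For each $k$, let $$s_k=\sup\{t<t_k:\mathcal C(X(t))\not\subseteq\mathcal C(\eta)\},$$ with the convention $s_k=0$ if this set is empty. Then $$\liminf_{k\to\infty}\frac{t_k-s_k}{t_k}=\epsilon_1>0 .$$
   Context: Fix integers $Q\ge1$ and $E\ge1$; queues are indexed by $q\in\{1,\dots,Q\}$ and environment states by $e\in\mathcal E=\{1,\dots,E\}$. For each $e$, $\mathcal S^e\subset\mathbb R^Q$ is a finite nonempty complete set of service vectors (components may be negative). Complete means that if $S\in\mathcal S^e$ and $S_q>0$, then replacing $S_q$ by $0$ gives a vector in $\mathcal S^e$. An environment trace is a measurable map $e:[0,\infty)\to\mathcal E$ with existing time proportions. The cumulative arrival $N(t)\in\mathbb R^Q_{\ge0}$ is componentwise nondecreasing with left limits, with traffic load $\rho=\lim_{t\to\infty}N(t)/t$. For $Y\in\mathbb R^Q_{\ge0}$, let $\hat{\mathcal S}^e(Y)=\arg\max_{S\in\mathcal S^e}\langle S,BY\rangle$. A cone schedule is a measurable map $S(\cdot)$, with workload $X(t)=X(0)+N(t)-\int_0^tS(z)\,dz\ge0$, such that for all $t$: - $S(t)\in\hat{\mathcal S}^{e(t)}(X(t))$; - $S_q(t)\le0$ whenever $X_q(t)=0$. Cones: for $Y\in\mathbb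 R^Q_{\ge0}$, $$\mathcal C^e(Y)=\{Z\in\mathbb R^Q_{\ge0}:\hat{\mathcal S}^e(Z)\cap\hat{\mathcal S}^e(Y)\ne\emptyset\},\qquad \mathcal C(Y)=\bigcap_{e\in\mathcal E}\mathcal C^e(Y).$$ *)

theory Defs
  imports "HOL-Analysis.Analysis"
begin

text \<open>Queues are indexed by a finite type 'q (so Q = CARD('q) \<ge> 1), environment
states by a finite type 'e (so E = CARD('e) \<ge> 1). Vectors in R^Q are real^'q.\<close>

definition nonneg_vec :: "real^'q \<Rightarrow> bool" where
  "nonneg_vec Y \<longleftrightarrow> (\<forall>i. 0 \<le> Y $ i)"

definition complete_service_set :: "(real^'q) set \<Rightarrow> bool" where
  "complete_service_set SS \<longleftrightarrow> finite SS \<and> SS \<noteq> {} \<and>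
     (\<forall>S\<in>SS. \<forall>q. 0 < S $ q \<longrightarrow> (\<chi> i. if i = q then 0 else S $ i) \<in> SS)"

definition opt_services :: "real^'q^'q \<Rightarrow> (real^'q) set \<Rightarrow> real^'q \<Rightarrow> (real^'q) set" where
  "opt_services B SS Y = {S \<in> SS. \<forall>S'\<in>SS. S' \<bullet> (B *v Y) \<le> S \<bullet> (B *v Y)}"

definition cone_env :: "real^'q^'q \<Rightarrow> (real^'q) set \<Rightarrow> real^'q \<Rightarrow> (real^'q) set" where
  "cone_env B SS Y = {Z. nonneg_vec Z \<and> opt_services B SS Z \<inter> opt_services B SS Y \<noteq> {}}"

definition cone :: "real^'q^'q \<Rightarrow> ('e::finite \<Rightarrow> (real^'q) set) \<Rightarrow> real^'q \<Rightarrow> (real^'q) set" where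
  "cone B Sset Y = (\<Inter>e. cone_env B (Sset e) Y)"

definition env_trace :: "(real \<Rightarrow> 'e::finite) \<Rightarrow> bool" where
  "env_trace env \<longleftrightarrow>
     (\<forall>e. {t \<in> {0..}. env t = e} \<in> sets lebesgue) \<and>
     (\<forall>e. \<exists>p. ((\<lambda>t. measure lebesgue {z \<in> {0..t}. env z = e} / t) \<longlongrightarrow> p) at_top)"

definition arrival_process :: "(real \<Rightarrow> real^'q) \<Rightarrow> bool" where
  "arrival_process N \<longleftrightarrow>
     (\<forall>t\<ge>0. nonneg_vec (N t)) \<and>
     (\<forall>s t. 0 \<le> s \<longrightarrow> s \<le> t \<longrightarrow> (\<forall>q. N s $ q \<le> N t $ q)) \<and>
     (\<forall>t>0. \<exists>l. (N \<longlongrightarrow> l) (at_left t)) \<and>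
     (\<exists>\<rho>. ((\<lambda>t. N t /\<^sub>R t) \<longlongrightarrow> \<rho>) at_top)"

definition workload :: "real^'q \<Rightarrow> (real \<Rightarrow> real^'q) \<Rightarrow> (real \<Rightarrow> real^'q) \<Rightarrow> real \<Rightarrow> real^'q" where
  "workload X0 N Sch t = X0 + N t - integral {0..t} Sch"

definition cone_schedule ::
  "real^'q^'q \<Rightarrow> ('e::finite \<Rightarrow> (real^'q) set) \<Rightarrow> (real \<Rightarrow> 'e) \<Rightarrow> (real \<Rightarrow> real^'q)
   \<Rightarrow> real^'q \<Rightarrow> (real \<Rightarrow> real^'q) \<Rightarrow> bool" where
  "cone_schedule B Sset env N X0 Sch \<longleftrightarrow>
     set_borel_measurable lebesgue {0..} Sch \<and>
     (\<forall>t\<ge>0. nonneg_vec (workload X0 N Sch t)) \<and>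
     (\<forall>t\<ge>0. Sch t \<in> opt_services B (Sset (env t)) (workload X0 N Sch t)) \<and>
     (\<forall>t\<ge>0. \<forall>q. workload X0 N Sch t $ q = 0 \<longrightarrow> Sch t $ q \<le> 0)"

definition last_exit :: "real^'q^'q \<Rightarrow> ('e::finite \<Rightarrow> (real^'q) set) \<Rightarrow> (real \<Rightarrow> real^'q)
   \<Rightarrow> real^'q \<Rightarrow> real \<Rightarrow> real" where
  "last_exit B Sset X \<eta> tk =
     (let T = {t. 0 \<le> t \<and> t < tk \<and> \<not> cone B Sset (X t) \<subseteq> cone B Sset \<eta>}
      in if T = {} then 0 else Sup T)"

end

theory Submission
  imports Defs
begin

(* Cones only depend on the direction of their argument, and the
   argmax sets are upper semicontinuous: every Y in a small ball around eta has
   argmax sets contained in those of eta, hence C(Y) is contained in C(eta).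
   On the other hand the workload moves at bounded speed up to a sublinear
   error: service vectors range over a finite set, and N(t) = t rho + o(t).
   So if X(t_k)/t_k is close to eta, then X(s)/t_k stays in the good ball for
   all s in a window [t_k - delta t_k, t_k] of length proportional to t_k,
   which forces s_k <= (1 - delta) t_k for all large k. *)

section \<open>Cones\<close>

lemma opt_services_scaleR:
  assumes "0 < c"
  shows "opt_services B SS (c *\<^sub>R Y) = opt_services B SS Y"
  using assms unfolding opt_services_def
  by (auto simp: matrix_vector_mult_scaleR inner_scaleR_right mult_le_cancel_left_pos)

lemma cone_scaleR:
  assumes "0 < c"
  shows "cone B Sset (c *\<^sub>R Y) = cone B Sset Y"
  unfolding cone_def cone_env_def opt_services_scaleR[OF assms] ..

text \<open>Upper semicontinuity of the argmax: a service vector that is strictly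
  beaten at eta stays strictly beaten near eta, by continuity of
  Y \<mapsto> S \<bullet> (B *v Y); finiteness makes the neighbourhood uniform.\<close>

lemma opt_services_nbhd:
  fixes SS :: "(real^'q::finite) set"
  assumes fin: "finite SS"
  shows "\<forall>\<^sub>F Y in nhds \<eta>. opt_services B SS Y \<subseteq> opt_services B SS \<eta>"
proof -
  have "\<forall>\<^sub>F Y in nhds \<eta>. \<forall>S\<in>SS - opt_services B SS \<eta>.
          \<exists>S'\<in>SS. S \<bullet> (B *v Y) < S' \<bullet> (B *v Y)"
  proof (rule eventually_ball_finite, use fin in simp, intro ballI)
    fix S assume "S \<in> SS - opt_services B SS \<eta>"
    then obtain S' where S': "S' \<in> SS" "S \<bullet> (B *v \<eta>) < S' \<bullet> (B *v \<eta>)"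
      unfolding opt_services_def by force
    have "((\<lambda>Y. S' \<bullet> (B *v Y) - S \<bullet> (B *v Y)) \<longlongrightarrow> S' \<bullet> (B *v \<eta>) - S \<bullet> (B *v \<eta>)) (nhds \<eta>)"
      by (intro tendsto_intros bounded_linear.tendsto[OF matrix_vector_mul_bounded_linear]
          filterlim_ident)
    then have "\<forall>\<^sub>F Y in nhds \<eta>. 0 < S' \<bullet> (B *v Y) - S \<bullet> (B *v Y)"
      by (rule order_tendstoD(1)) (use S'(2) in simp)
    then show "\<forall>\<^sub>F Y in nhds \<eta>. \<exists>S'\<in>SS. S \<bullet> (B *v Y) < S' \<bullet> (B *v Y)"
      by eventually_elim (use S'(1) in auto)
  qed
  then show ?thesis
    by eventually_elim (force simp: opt_services_def)
qed

lemma cone_nbhd: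
  fixes Sset :: "'e::finite \<Rightarrow> (real^'q::finite) set"
  assumes fin: "\<And>e. finite (Sset e)"
  shows "\<exists>r>0. \<forall>Y. dist Y \<eta> < r \<longrightarrow> cone B Sset Y \<subseteq> cone B Sset \<eta>"
proof -
  have "\<forall>\<^sub>F Y in nhds \<eta>. \<forall>e. opt_services B (Sset e) Y \<subseteq> opt_services B (Sset e) \<eta>"
    by (intro eventually_all_finite allI opt_services_nbhd fin)
  then have "\<forall>\<^sub>F Y in nhds \<eta>. cone B Sset Y \<subseteq> cone B Sset \<eta>"
    by eventually_elim (unfold cone_def cone_env_def, blast)
  then show ?thesis
    unfolding eventually_nhds_metric by blast
qed

section \<open>Growth of the workload\<close>

text \<open>A cone schedule only uses service vectors from the finite sets Sset e,
  so it is uniformly bounded.\<close>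

lemma cone_schedule_bounded:
  assumes fin: "\<And>e. finite (Sset e)"
    and sched: "cone_schedule B Sset env N X0 Sch"
  shows "\<exists>M. \<forall>t\<ge>0. norm (Sch t) \<le> M"
proof (intro exI allI impI)
  fix t :: real assume "0 \<le> t"
  then have "Sch t \<in> Sset (env t)"
    using sched unfolding cone_schedule_def opt_services_def by auto
  then have "norm (Sch t) \<le> (\<Sum>S\<in>Sset (env t). norm S)"
    by (intro member_le_sum) (use fin in auto)
  also have "\<dots> \<le> (\<Sum>e\<in>UNIV. \<Sum>S\<in>Sset e. norm S)"
    by (rule member_le_sum) (auto intro: sum_nonneg)
  finally show "norm (Sch t) \<le> (\<Sum>e\<in>UNIV. \<Sum>S\<in>Sset e. norm S)" .
qed

lemma bounded_measurable_integrable_on: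
  fixes f :: "real \<Rightarrow> 'a::euclidean_space"
  assumes meas: "set_borel_measurable lebesgue {0..} f"
    and bnd: "\<And>t. 0 \<le> t \<Longrightarrow> norm (f t) \<le> M"
    and "0 \<le> a"
  shows "f integrable_on {a..b}"
proof -
  have "f \<in> borel_measurable (lebesgue_on {0..})"
    using meas unfolding set_borel_measurable_def
    by (subst borel_measurable_restrict_space_iff) auto
  then have "f \<in> borel_measurable (lebesgue_on {a..b})"
    by (rule measurable_restrict_mono) (use assms in auto)
  then show ?thesis
    by (rule measurable_bounded_by_integrable_imp_integrable[where g="\<lambda>_. M"])
       (use assms in auto)
qed

lemma integral_increment_bound:
  fixes f :: "real \<Rightarrow> 'a::euclidean_space"
  assumes meas: "set_borel_measurable lebesgue {0..} f"
    and bnd: "\<And>t. 0 \<le> t \<Longrightarrow> norm (f t) \<le> M"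
    and "0 \<le> s" "s \<le> t"
  shows "norm (integral {0..t} f - integral {0..s} f) \<le> M * (t - s)"
proof -
  have M0: "0 \<le> M" using bnd[of 0] norm_ge_zero order_trans by blast
  have "f integrable_on {0..t}"
    by (rule bounded_measurable_integrable_on[OF meas bnd]) auto
  then have "integral {0..s} f + integral {s..t} f = integral {0..t} f"
    by (intro Henstock_Kurzweil_Integration.integral_combine) (use assms in auto)
  then have split: "integral {0..t} f - integral {0..s} f = integral {s..t} f"
    by (metis add_diff_cancel_left')
  have "f integrable_on {s..t}"
    by (rule bounded_measurable_integrable_on[OF meas bnd]) (use assms in auto)
  then have "norm (integral {s..t} f) \<le> M * Henstock_Kurzweil_Integration.content (cbox s t)"
    by (intro has_integral_bound[OF M0]) (use assms bnd in auto)
  then show ?thesis using split assms by simp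
qed

text \<open>For small s this
  uses monotonicity of N, for large s the convergence of N s / s.\<close>

lemma arrival_sublinear:
  fixes N :: "real \<Rightarrow> real^'q::finite"
  assumes arr: "arrival_process N"
    and rho: "((\<lambda>t. N t /\<^sub>R t) \<longlongrightarrow> \<rho>) at_top"
    and eps: "0 < \<epsilon>"
  shows "\<exists>T. \<forall>t\<ge>T. \<forall>s. 0 \<le> s \<longrightarrow> s \<le> t \<longrightarrow> norm (N s - s *\<^sub>R \<rho>) \<le> \<epsilon> * t"
proof -
  obtain T0 where T0: "\<And>t. t \<ge> T0 \<Longrightarrow> dist (N t /\<^sub>R t) \<rho> < \<epsilon>"
    using tendstoD[OF rho eps] unfolding eventually_at_top_linorder by blast
  define T1 where "T1 = max 1 T0"
  have nonneg: "\<And>t. 0 \<le> t \<Longrightarrow> nonneg_vec (N t)"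
    and mono: "\<And>s t q. 0 \<le> s \<Longrightarrow> s \<le> t \<Longrightarrow> N s $ q \<le> N t $ q"
    using arr unfolding arrival_process_def by auto
  define C where "C = (\<Sum>i\<in>UNIV. N T1 $ i) + T1 * norm \<rho>"
  have initial: "norm (N s - s *\<^sub>R \<rho>) \<le> C" if "0 \<le> s" "s \<le> T1" for s
  proof -
    have "norm (N s) \<le> (\<Sum>i\<in>UNIV. \<bar>N s $ i\<bar>)" by (rule norm_le_l1_cart)
    also have "\<dots> \<le> (\<Sum>i\<in>UNIV. N T1 $ i)"
      by (rule sum_mono) (use nonneg[OF that(1)] mono[OF that] in \<open>auto simp: nonneg_vec_def\<close>)
    finally have "norm (N s) \<le> (\<Sum>i\<in>UNIV. N T1 $ i)" .
    moreover have "norm (s *\<^sub>R \<rho>) \<le> T1 * norm \<rho>"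
      using that by (simp add: mult_right_mono)
    ultimately show ?thesis
      using norm_triangle_ineq4[of "N s" "s *\<^sub>R \<rho>"] unfolding C_def by linarith
  qed
  show ?thesis
  proof (intro exI allI impI)
    fix t s assume t: "max T1 (C / \<epsilon>) \<le> t" and s: "0 \<le> s" "s \<le> t"
    show "norm (N s - s *\<^sub>R \<rho>) \<le> \<epsilon> * t"
    proof (cases "s \<le> T1")
      case True
      have "C \<le> \<epsilon> * t" using t eps by (simp add: field_simps)
      then show ?thesis using initial[OF s(1) True] by linarith
    next
      case False
      then have sp: "0 < s" "T0 \<le> s" unfolding T1_def by auto
      have "N s - s *\<^sub>R \<rho> = s *\<^sub>R (N s /\<^sub>R s - \<rho>)" using sp by (simp add: algebra_simps)
      then have "norm (N s - s *\<^sub>R \<rho>) = s * dist (N s /\<^sub>R s) \<rho>"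
        using sp by (simp add: dist_norm)
      also have "\<dots> \<le> s * \<epsilon>" using T0[OF sp(2)] sp by (simp add: less_imp_le)
      also have "\<dots> \<le> \<epsilon> * t" using s eps by (simp add: mult.commute mult_left_mono)
      finally show ?thesis .
    qed
  qed
qed

text \<open>The workload is Lipschitz with constant norm rho + M up to a sublinear
  error: this is the only dynamical input of the argument.\<close>

lemma workload_increment_bound:
  fixes N Sch :: "real \<Rightarrow> real^'q::finite"
  assumes arr: "arrival_process N"
    and rho: "((\<lambda>t. N t /\<^sub>R t) \<longlongrightarrow> \<rho>) at_top"
    and meas: "set_borel_measurable lebesgue {0..} Sch"
    and bnd: "\<And>t. 0 \<le> t \<Longrightarrow> norm (Sch t) \<le> M"
    and eps: "0 < \<epsilon>"
  shows "\<exists>T. \<forall>t\<ge>T. \<forall>s. 0 \<le> s \<longrightarrow> s \<le> t \<longrightarrow>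
           norm (workload X0 N Sch s - workload X0 N Sch t) \<le> (norm \<rho> + M) * (t - s) + \<epsilon> * t"
proof -
  obtain T where T: "\<And>t s. t \<ge> T \<Longrightarrow> 0 \<le> s \<Longrightarrow> s \<le> t \<Longrightarrow> norm (N s - s *\<^sub>R \<rho>) \<le> (\<epsilon>/2) * t"
    using arrival_sublinear[OF arr rho, of "\<epsilon>/2"] eps by auto
  show ?thesis
  proof (intro exI allI impI)
    fix t s assume t: "T \<le> t" and s: "0 \<le> s" "s \<le> t"
    let ?I = "\<lambda>t. integral {0..t} Sch"
    have "workload X0 N Sch s - workload X0 N Sch t
          = ((N s - s *\<^sub>R \<rho>) - (N t - t *\<^sub>R \<rho>)) - (t - s) *\<^sub>R \<rho> + (?I t - ?I s)"
      unfolding workload_def by (simp add: algebra_simps)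
    also have "norm \<dots> \<le> (norm (N s - s *\<^sub>R \<rho>) + norm (N t - t *\<^sub>R \<rho>))
                         + norm ((t - s) *\<^sub>R \<rho>) + norm (?I t - ?I s)"
      by (intro norm_triangle_le add_mono norm_triangle_ineq4 order_trans[OF norm_triangle_ineq4]
          order_refl)
    also have "\<dots> \<le> ((\<epsilon>/2) * t + (\<epsilon>/2) * t) + (t - s) * norm \<rho> + M * (t - s)"
      using T[OF t s] T[OF t _ order_refl] s
        integral_increment_bound[OF meas bnd s] by (intro add_mono) auto
    finally show "norm (workload X0 N Sch s - workload X0 N Sch t)
                  \<le> (norm \<rho> + M) * (t - s) + \<epsilon> * t"
      by (simp add: algebra_simps)
  qed
qed

section \<open>Last exit times\<close>

lemma cone_window:
  fixes X :: "real \<Rightarrow> real^'q::finite"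
  assumes nbhd: "\<And>Y. dist Y \<eta> < r \<Longrightarrow> cone B Sset Y \<subseteq> cone B Sset \<eta>"
    and t: "0 < t" and close: "dist (X t /\<^sub>R t) \<eta> < r/4"
    and incr: "norm (X s - X t) \<le> K * (t - s) + (r/4) * t"
    and delta: "\<delta> * K \<le> r/2" "0 \<le> K" and s: "t - \<delta> * t \<le> s" "s \<le> t"
  shows "cone B Sset (X s) \<subseteq> cone B Sset \<eta>"
proof -
  have "K * (t - s) \<le> K * (\<delta> * t)" using s delta by (intro mult_left_mono) auto
  also have "\<dots> = (\<delta> * K) * t" by (simp add: ac_simps)
  also have "\<dots> \<le> (r/2) * t" using delta t by (intro mult_right_mono) auto
  finally have "norm (X s - X t) \<le> (3/4 * r) * t" using incr by linarith
  moreover have "norm ((X s - X t) /\<^sub>R t) = norm (X s - X t) / t"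
    using t by (simp add: divide_inverse_commute)
  ultimately have "norm ((X s - X t) /\<^sub>R t) \<le> 3/4 * r"
    using t by (simp add: pos_divide_le_eq)
  moreover have "dist ((1/t) *\<^sub>R X s) \<eta> = norm ((X s - X t) /\<^sub>R t + (X t /\<^sub>R t - \<eta>))"
    by (simp add: dist_norm algebra_simps divide_inverse)
  ultimately have "dist ((1/t) *\<^sub>R X s) \<eta> < r"
    using close norm_triangle_ineq[of "(X s - X t) /\<^sub>R t" "X t /\<^sub>R t - \<eta>"]
    by (simp only: dist_norm)
  then show ?thesis using nbhd cone_scaleR[of "1/t"] t by force
qed

lemma last_exit_window:
  assumes t: "0 < t" and delta: "0 < \<delta>" "\<delta> \<le> 1"
    and window: "\<And>s. 0 \<le> s \<Longrightarrow> t - \<delta> * t \<le> s \<Longrightarrow> s < t \<Longrightarrow> cone B Sset (X s) \<subseteq> cone B Sset \<eta>"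
  shows "\<delta> \<le> (t - last_exit B Sset X \<eta> t) / t \<and> (t - last_exit B Sset X \<eta> t) / t \<le> 1"
proof -
  define T where "T = {s. 0 \<le> s \<and> s < t \<and> \<not> cone B Sset (X s) \<subseteq> cone B Sset \<eta>}"
  have early: "s < t - \<delta> * t" if "s \<in> T" for s
    using that window unfolding T_def by force
  have "0 \<le> t - \<delta> * t" using delta t by (simp add: mult_left_le_one_le)
  moreover have "T \<noteq> {} \<Longrightarrow> Sup T \<le> t - \<delta> * t"
    by (rule cSup_least) (use early in force)+
  moreover have "0 \<le> Sup T" if "s \<in> T" for s
  proof -
    have "bdd_above T" unfolding T_def bdd_above_def by (auto intro: less_imp_le)
    then show ?thesis using cSup_upper[OF that] that unfolding T_def by force
  qed
  ultimately have "0 \<le> last_exit B Sset X \<eta> t \<and> last_exit B Sset X \<eta> t \<le> t - \<delta> * t"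
    unfolding last_exit_def T_def[symmetric] Let_def by auto
  then show ?thesis using t by (simp add: field_simps)
qed

lemma liminf_pos_finite:
  fixes f :: "nat \<Rightarrow> real"
  assumes "0 < \<delta>" and ev: "\<forall>\<^sub>F k in sequentially. \<delta> \<le> f k \<and> f k \<le> 1"
  shows "\<exists>\<epsilon>>0. liminf (\<lambda>k. ereal (f k)) = ereal \<epsilon>"
proof -
  have lower: "ereal \<delta> \<le> liminf (\<lambda>k. ereal (f k))"
    by (rule Liminf_bounded) (use ev in \<open>auto elim: eventually_mono\<close>)
  have upper: "liminf (\<lambda>k. ereal (f k)) \<le> ereal 1"
    by (rule Liminf_le) (use ev in \<open>auto elim: eventually_mono\<close>)
  show ?thesis
    using lower upper \<open>0 < \<delta>\<close> by (cases "liminf (\<lambda>k. ereal (f k))") auto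
qed

text \<open>Only finiteness of the service sets, the schedule and arrival
  hypotheses and the convergence of X(t_k)/t_k are used.\<close>

theorem lemma5:
  fixes B :: "real^'q::finite^'q"
    and Sset :: "'e::finite \<Rightarrow> (real^'q) set"
    and env :: "real \<Rightarrow> 'e"
    and N :: "real \<Rightarrow> real^'q"
    and X0 :: "real^'q"
    and Sch :: "real \<Rightarrow> real^'q"
    and tk :: "nat \<Rightarrow> real"
    and \<eta> :: "real^'q"
  assumes services: "\<forall>e. complete_service_set (Sset e)"
    and symB: "transpose B = B"
    and posdefB: "\<forall>x. x \<noteq> 0 \<longrightarrow> 0 < x \<bullet> (B *v x)"
    and offdiagB: "\<forall>p q. p \<noteq> q \<longrightarrow> B $ p $ q \<le> 0"
    and env: "env_trace env"
    and arr: "arrival_process N"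
    and sched: "cone_schedule B Sset env N X0 Sch"
    and tk_nonneg: "\<forall>k. 0 \<le> tk k"
    and tk_mono: "strict_mono tk"
    and tk_unbounded: "filterlim tk at_top sequentially"
    and lim: "((\<lambda>k. workload X0 N Sch (tk k) /\<^sub>R tk k) \<longlongrightarrow> \<eta>) sequentially"
    and eta_ne: "\<eta> \<noteq> 0"
  shows "\<exists>\<epsilon>1>0. liminf (\<lambda>k. ereal ((tk k - last_exit B Sset (workload X0 N Sch) \<eta> (tk k)) / tk k))
                 = ereal \<epsilon>1"
proof -
  let ?X = "workload X0 N Sch"
  have fin: "\<And>e. finite (Sset e)" using services unfolding complete_service_set_def by auto
  obtain r where r: "0 < r" and nbhd: "\<And>Y. dist Y \<eta> < r \<Longrightarrow> cone B Sset Y \<subseteq> cone B Sset \<eta>"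
    using cone_nbhd[of Sset \<eta> B] fin by blast
  obtain M where bnd: "\<And>t. 0 \<le> t \<Longrightarrow> norm (Sch t) \<le> M"
    using cone_schedule_bounded[OF fin sched] by blast
  have meas: "set_borel_measurable lebesgue {0..} Sch" using sched unfolding cone_schedule_def by auto
  obtain \<rho> where rho: "((\<lambda>t. N t /\<^sub>R t) \<longlongrightarrow> \<rho>) at_top" using arr unfolding arrival_process_def by auto
  define K where "K = norm \<rho> + M"
  have K0: "0 \<le> K" unfolding K_def using bnd[of 0] norm_ge_zero[of \<rho>] norm_ge_zero[of "Sch 0"] by linarith
  have "\<exists>T. \<forall>t\<ge>T. \<forall>s. 0 \<le> s \<longrightarrow> s \<le> t \<longrightarrow> norm (?X s - ?X t) \<le> K * (t - s) + (r/4) * t"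
    unfolding K_def by (rule workload_increment_bound[OF arr rho meas bnd]) (simp_all add: r)
  then obtain T where incr: "\<And>t s. T \<le> t \<Longrightarrow> 0 \<le> s \<Longrightarrow> s \<le> t \<Longrightarrow>
      norm (?X s - ?X t) \<le> K * (t - s) + (r/4) * t"
    by blast
  define \<delta> where "\<delta> = min 1 (r / (2 * (K + 1)))"
  have "\<delta> * K \<le> r / (2 * (K + 1)) * (K + 1)"
    unfolding \<delta>_def using K0 r by (intro mult_mono) auto
  also have "\<dots> = r/2" using K0 by (simp add: field_simps)
  finally have delta: "0 < \<delta>" "\<delta> \<le> 1" "\<delta> * K \<le> r/2"
    using r K0 by (auto simp: \<delta>_def)
  have "\<forall>\<^sub>F k in sequentially. max 1 T \<le> tk k"
    using tk_unbounded unfolding filterlim_at_top by blast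
  moreover have "\<forall>\<^sub>F k in sequentially. dist (?X (tk k) /\<^sub>R tk k) \<eta> < r/4"
    by (rule tendstoD[OF lim]) (use r in simp)
  ultimately have "\<forall>\<^sub>F k in sequentially. \<delta> \<le> (tk k - last_exit B Sset ?X \<eta> (tk k)) / tk k
                                 \<and> (tk k - last_exit B Sset ?X \<eta> (tk k)) / tk k \<le> 1"
  proof eventually_elim
    case (elim k)
    then have t: "0 < tk k" "T \<le> tk k" by auto
    show ?case
    proof (rule last_exit_window[OF t(1) delta(1,2)])
      fix s assume s: "0 \<le> s" "tk k - \<delta> * tk k \<le> s" "s < tk k"
      then have step: "norm (?X s - ?X (tk k)) \<le> K * (tk k - s) + (r/4) * tk k"
        by (intro incr t(2)) auto
      show "cone B Sset (?X s) \<subseteq> cone B Sset \<eta>"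
        using cone_window[where X="?X", OF nbhd t(1) elim(2) step delta(3) K0] s by auto
    qed
  qed
  then show ?thesis by (rule liminf_pos_finite[OF delta(1)])
qed

end
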